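(* For $j\in\{1,\dots,n\}$, let $g^{\mathrm{in}}_j$ be the restriction of $\chi_{\tau_j}$ with top point $\tau_j=(\tau_j^1,\tau_j^2)$ to $X_j=[q_j^l,q_j^u]$, where $q_j^l\le\tau_j^1\le q_j^u$. Write $\tau^1=(\tau_j^1)_{j},\tau^2=(\tau_j^2)_j,q^l=(q^l_j)_j,q^u=(q^u_j)_j\in\mathbb{R}^n$. Then: (i) $g^{\mathrm{out}}=\star\{(g^{\mathrm{in}}_j,X_j)\}_{j=1}^n$ is the restriction of the $\chi$ function with top point $(\mathbf{1}^\top\tau^1,\mathbf{1}^\top\tau^2)$ to the domain $[\mathbf{1}^\top q^l,\mathbf{1}^\top q^u]$; (ii) the set of maximizers in the definition of $g^{\mathrm{out}}(z)$ is $\{x^*\in[q^l,\tau^1]:\mathbf{1}^\top x^*=z\}$ if $\mathbf{1}^\top q^l\le z<\mathbf{1}^\top\tau^1$, is $\{\tau^1\}$ if $z=\mathbf{1}^\top\tau^1$, and is $\{x^*\in[\tau^1,q^u]:\mathbf{1}^\top x^*=z\}$ if $\mathbf{1}^\top\tau^1<z\le\mathbf{1}^\top q^u$.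
   Context: For $\tau=(\tau_1,\tau_2)\in\mathbb{R}^2$, $\chi_\tau(x)=x-\tau_1+\tau_2$ for $x\le\tau_1$ and $\chi_\tau(x)=-x+\tau_1+\tau_2$ for $x>\tau_1$; $\tau$ is its top point. The operator $\star$: given $g_j:X_j\to\mathbb{R}$, $j=1,\dots,n$, $\star\{(g_j,X_j)\}_{j=1}^n$ is the function with domain the Minkowski sum $\sum_jX_j$ defined by $z\mapsto\max\{\sum_jg_j(x_j):x\in\mathbb{R}^n,\ \mathbf{1}^\top x=z,\ x_j\in X_j\ \forall j\}$. For vectors, $[a,b]=\{x:a\le x\le b\}$ componentwise; $\mathbf{1}$ is the all-ones vector. *)

theory Defs
  imports "HOL-Analysis.Analysis"
begin

definition chi :: "real \<times> real \<Rightarrow> real \<Rightarrow> real" where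
  "chi tau x = (if x \<le> fst tau then x - fst tau + snd tau else - x + fst tau + snd tau)"

text \<open>Feasible decompositions of z: x with x_j in X_j and 1^T x = z.
  Indices j range over the finite type 'n (so n = CARD('n)).\<close>
definition feasible :: "('n::finite \<Rightarrow> real set) \<Rightarrow> real \<Rightarrow> (real^'n) set" where
  "feasible X z = {x. (\<forall>j. x $ j \<in> X j) \<and> (\<Sum>j\<in>UNIV. x $ j) = z}"

text \<open>Domain of the star-function: the Minkowski sum of the X_j.\<close>
definition minkowski_sum :: "('n::finite \<Rightarrow> real set) \<Rightarrow> real set" where
  "minkowski_sum X = {z. \<exists>x. (\<forall>j. x $ j \<in> X j) \<and> (\<Sum>j\<in>UNIV. x $ j) = z}"

definition star :: "('n::finite \<Rightarrow> real \<Rightarrow> real) \<Rightarrow> ('n \<Rightarrow> real set) \<Rightarrow> real \<Rightarrow> real" where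
  "star g X z = (GREATEST v. v \<in> (\<lambda>x. \<Sum>j\<in>UNIV. g j (x $ j)) ` feasible X z)"

definition star_argmax :: "('n::finite \<Rightarrow> real \<Rightarrow> real) \<Rightarrow> ('n \<Rightarrow> real set) \<Rightarrow> real \<Rightarrow> (real^'n) set" where
  "star_argmax g X z = {x \<in> feasible X z. \<forall>y \<in> feasible X z.
      (\<Sum>j\<in>UNIV. g j (y $ j)) \<le> (\<Sum>j\<in>UNIV. g j (x $ j))}"

end

theory Submission
  imports Defs
begin

(* Since chi (a, b) x = b - |x - a|, the objective at a decomposition x of z is
   sum t2 - sum_j |x_j - t1_j|, and by the triangle inequality sum_j |x_j - t1_j| >= |z - sum t1|,
   with equality exactly when all deviations x_j - t1_j have the same sign.  Every z between
   sum ql and sum qu has such a decomposition (interpolate between ql and t1, or between t1 and qu),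
   so the optimal value is chi (sum t1, sum t2) z and the maximizers are the feasible x lying
   entirely below or entirely above t1; the sign of z - sum t1 decides which side is possible. *)

lemma chi_eq_abs: "chi (a, b) x = b - \<bar>x - a\<bar>"
  by (simp add: chi_def abs_if)

lemma sum_abs_eq_abs_sum_iff:
  fixes f :: "'a \<Rightarrow> real"
  assumes "finite A"
  shows "(\<Sum>i\<in>A. \<bar>f i\<bar>) = \<bar>\<Sum>i\<in>A. f i\<bar> \<longleftrightarrow> (\<forall>i\<in>A. f i \<le> 0) \<or> (\<forall>i\<in>A. 0 \<le> f i)"
proof
  assume eq: "(\<Sum>i\<in>A. \<bar>f i\<bar>) = \<bar>\<Sum>i\<in>A. f i\<bar>"
  show "(\<forall>i\<in>A. f i \<le> 0) \<or> (\<forall>i\<in>A. 0 \<le> f i)"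
  proof (cases "0 \<le> (\<Sum>i\<in>A. f i)")
    case True
    then have "(\<Sum>i\<in>A. \<bar>f i\<bar> - f i) = 0"
      using eq by (simp add: sum_subtractf)
    then have "\<forall>i\<in>A. \<bar>f i\<bar> - f i = 0"
      using assms by (simp add: sum_nonneg_eq_0_iff)
    then show ?thesis by auto
  next
    case False
    then have "(\<Sum>i\<in>A. \<bar>f i\<bar> + f i) = 0"
      using eq by (simp add: sum.distrib)
    then have "\<forall>i\<in>A. \<bar>f i\<bar> + f i = 0"
      using assms by (simp add: sum_nonneg_eq_0_iff)
    then show ?thesis by auto
  qed
next
  assume "(\<forall>i\<in>A. f i \<le> 0) \<or> (\<forall>i\<in>A. 0 \<le> f i)"
  then show "(\<Sum>i\<in>A. \<bar>f i\<bar>) = \<bar>\<Sum>i\<in>A. f i\<bar>"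
  proof
    assume "\<forall>i\<in>A. f i \<le> 0"
    then show ?thesis by (simp add: sum_nonpos sum_negf[symmetric])
  next
    assume "\<forall>i\<in>A. 0 \<le> f i"
    then show ?thesis by (simp add: sum_nonneg)
  qed
qed

lemma sum_chi_le:
  fixes a b x :: "'a \<Rightarrow> real"
  shows "(\<Sum>i\<in>A. chi (a i, b i) (x i)) \<le> chi (\<Sum>i\<in>A. a i, \<Sum>i\<in>A. b i) (\<Sum>i\<in>A. x i)"
  using sum_abs[of "\<lambda>i. x i - a i" A]
  by (simp add: chi_eq_abs sum_subtractf)

lemma sum_chi_eq_iff:
  fixes a b x :: "'a \<Rightarrow> real"
  assumes "finite A"
  shows "(\<Sum>i\<in>A. chi (a i, b i) (x i)) = chi (\<Sum>i\<in>A. a i, \<Sum>i\<in>A. b i) (\<Sum>i\<in>A. x i)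
    \<longleftrightarrow> (\<forall>i\<in>A. x i \<le> a i) \<or> (\<forall>i\<in>A. a i \<le> x i)"
  using sum_abs_eq_abs_sum_iff[OF assms, of "\<lambda>i. x i - a i"]
  by (simp add: chi_eq_abs sum_subtractf)

lemma ex_between_sum_eq:
  fixes a b :: "real^'n"
  assumes ab: "\<forall>j. a $ j \<le> b $ j"
    and z: "(\<Sum>j\<in>UNIV. a $ j) \<le> z" "z \<le> (\<Sum>j\<in>UNIV. b $ j)"
  obtains x :: "real^'n" where "\<forall>j. a $ j \<le> x $ j \<and> x $ j \<le> b $ j" "(\<Sum>j\<in>UNIV. x $ j) = z"
proof -
  define A B where "A = (\<Sum>j\<in>UNIV. a $ j)" and "B = (\<Sum>j\<in>UNIV. b $ j)"
  define s where "s = (if A = B then 0 else (z - A) / (B - A))"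
  have s: "0 \<le> s" "s \<le> 1" "A + s * (B - A) = z"
    using z unfolding s_def A_def[symmetric] B_def[symmetric] by (auto simp: field_simps)
  define x :: "real^'n" where "x = (\<chi> j. a $ j + s * (b $ j - a $ j))"
  have "a $ j \<le> x $ j \<and> x $ j \<le> b $ j" for j
    using ab s(1,2) mult_left_le_one_le[of "b $ j - a $ j" s] by (simp add: x_def)
  moreover have "(\<Sum>j\<in>UNIV. x $ j) = z"
    using s(3) by (simp add: x_def A_def B_def sum.distrib sum_subtractf sum_distrib_left[symmetric])
  ultimately show thesis using that by blast
qed

lemma star_eqI:
  assumes "\<forall>y\<in>feasible X z. (\<Sum>j\<in>UNIV. g j (y $ j)) \<le> c"
    and "w \<in> feasible X z" "(\<Sum>j\<in>UNIV. g j (w $ j)) = c"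
  shows "star g X z = c"
  unfolding star_def using assms by (intro Greatest_equality) auto

lemma star_argmax_eqI:
  assumes "\<forall>y\<in>feasible X z. (\<Sum>j\<in>UNIV. g j (y $ j)) \<le> c"
    and "w \<in> feasible X z" "(\<Sum>j\<in>UNIV. g j (w $ j)) = c"
  shows "star_argmax g X z = {x \<in> feasible X z. (\<Sum>j\<in>UNIV. g j (x $ j)) = c}"
  unfolding star_argmax_def using assms by (auto intro: order_antisym)

lemma minkowski_sum_box:
  fixes ql qu :: "real^'n"
  assumes "\<forall>j. ql $ j \<le> qu $ j"
  shows "minkowski_sum (\<lambda>j. {ql $ j .. qu $ j}) = {(\<Sum>j\<in>UNIV. ql $ j) .. (\<Sum>j\<in>UNIV. qu $ j)}"
proof (intro set_eqI iffI)
  fix z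
  assume "z \<in> minkowski_sum (\<lambda>j. {ql $ j .. qu $ j})"
  then show "z \<in> {(\<Sum>j\<in>UNIV. ql $ j) .. (\<Sum>j\<in>UNIV. qu $ j)}"
    by (auto simp: minkowski_sum_def intro!: sum_mono)
next
  fix z
  assume "z \<in> {(\<Sum>j\<in>UNIV. ql $ j) .. (\<Sum>j\<in>UNIV. qu $ j)}"
  then obtain x :: "real^'n" where "\<forall>j. ql $ j \<le> x $ j \<and> x $ j \<le> qu $ j" "(\<Sum>j\<in>UNIV. x $ j) = z"
    using ex_between_sum_eq[OF assms] by auto
  then show "z \<in> minkowski_sum (\<lambda>j. {ql $ j .. qu $ j})"
    by (auto simp: minkowski_sum_def)
qed

lemma vec_eq_if_le_and_sum_eq:
  fixes x y :: "real^'n"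
  assumes "\<forall>j. x $ j \<le> y $ j" "(\<Sum>j\<in>UNIV. x $ j) = (\<Sum>j\<in>UNIV. y $ j)"
  shows "x = y"
  using sum_mono_inv[OF assms(2)] assms(1) by (simp add: vec_eq_iff)

context
  fixes t1 t2 ql qu :: "real^'n"
  assumes t1_between: "\<forall>j. ql $ j \<le> t1 $ j \<and> t1 $ j \<le> qu $ j"
begin

lemma ex_feasible_same_side:
  assumes "(\<Sum>j\<in>UNIV. ql $ j) \<le> z" "z \<le> (\<Sum>j\<in>UNIV. qu $ j)"
  obtains x where "x \<in> feasible (\<lambda>j. {ql $ j .. qu $ j}) z"
    "(\<forall>j. x $ j \<le> t1 $ j) \<or> (\<forall>j. t1 $ j \<le> x $ j)"
proof (cases "z \<le> (\<Sum>j\<in>UNIV. t1 $ j)")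
  case True
  have "\<forall>j. ql $ j \<le> t1 $ j"
    using t1_between by blast
  then obtain x :: "real^'n"
    where x: "\<forall>j. ql $ j \<le> x $ j \<and> x $ j \<le> t1 $ j" "(\<Sum>j\<in>UNIV. x $ j) = z"
    using assms(1) True by (rule ex_between_sum_eq)
  have "ql $ j \<le> x $ j \<and> x $ j \<le> qu $ j" for j
    using x(1) t1_between by (meson order_trans)
  with x(2) have "x \<in> feasible (\<lambda>j. {ql $ j .. qu $ j}) z"
    by (simp add: feasible_def)
  with x(1) show thesis
    using that by blast
next
  case False
  have "\<forall>j. t1 $ j \<le> qu $ j"
    using t1_between by blast
  then obtain x :: "real^'n"
    where x: "\<forall>j. t1 $ j \<le> x $ j \<and> x $ j \<le> qu $ j" "(\<Sum>j\<in>UNIV. x $ j) = z"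
    using _ assms(2) by (rule ex_between_sum_eq) (use False in linarith)
  have "ql $ j \<le> x $ j \<and> x $ j \<le> qu $ j" for j
    using x(1) t1_between by (meson order_trans)
  with x(2) have "x \<in> feasible (\<lambda>j. {ql $ j .. qu $ j}) z"
    by (simp add: feasible_def)
  with x(1) show thesis
    using that by blast
qed

lemma
  assumes z: "(\<Sum>j\<in>UNIV. ql $ j) \<le> z" "z \<le> (\<Sum>j\<in>UNIV. qu $ j)"
  shows star_chi_box: "star (\<lambda>j. chi (t1 $ j, t2 $ j)) (\<lambda>j. {ql $ j .. qu $ j}) z
      = chi (\<Sum>j\<in>UNIV. t1 $ j, \<Sum>j\<in>UNIV. t2 $ j) z"
    and star_argmax_chi_box: "star_argmax (\<lambda>j. chi (t1 $ j, t2 $ j)) (\<lambda>j. {ql $ j .. qu $ j}) z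
      = {x \<in> feasible (\<lambda>j. {ql $ j .. qu $ j}) z. (\<forall>j. x $ j \<le> t1 $ j) \<or> (\<forall>j. t1 $ j \<le> x $ j)}"
proof -
  let ?F = "feasible (\<lambda>j. {ql $ j .. qu $ j}) z"
  let ?c = "chi (\<Sum>j\<in>UNIV. t1 $ j, \<Sum>j\<in>UNIV. t2 $ j) z"
  have upper: "\<forall>y\<in>?F. (\<Sum>j\<in>UNIV. chi (t1 $ j, t2 $ j) (y $ j)) \<le> ?c"
    using sum_chi_le[of "($) t1" "($) t2" "($) y" UNIV for y] by (auto simp: feasible_def)
  have optimal_iff: "(\<Sum>j\<in>UNIV. chi (t1 $ j, t2 $ j) (x $ j)) = ?c
      \<longleftrightarrow> (\<forall>j. x $ j \<le> t1 $ j) \<or> (\<forall>j. t1 $ j \<le> x $ j)" if "x \<in> ?F" for x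
    using that sum_chi_eq_iff[of UNIV "($) t1" "($) t2" "($) x"] by (simp add: feasible_def)
  obtain w where w: "w \<in> ?F" "(\<forall>j. w $ j \<le> t1 $ j) \<or> (\<forall>j. t1 $ j \<le> w $ j)"
    using ex_feasible_same_side[OF z] .
  then have "(\<Sum>j\<in>UNIV. chi (t1 $ j, t2 $ j) (w $ j)) = ?c"
    using optimal_iff by blast
  with upper w(1) show "star (\<lambda>j. chi (t1 $ j, t2 $ j)) (\<lambda>j. {ql $ j .. qu $ j}) z = ?c"
    and "star_argmax (\<lambda>j. chi (t1 $ j, t2 $ j)) (\<lambda>j. {ql $ j .. qu $ j}) z
      = {x \<in> ?F. (\<forall>j. x $ j \<le> t1 $ j) \<or> (\<forall>j. t1 $ j \<le> x $ j)}"
    by (auto simp: star_eqI star_argmax_eqI optimal_iff)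
qed

lemma star_argmax_chi_box_below:
  assumes z: "(\<Sum>j\<in>UNIV. ql $ j) \<le> z" "z \<le> (\<Sum>j\<in>UNIV. t1 $ j)"
  shows "star_argmax (\<lambda>j. chi (t1 $ j, t2 $ j)) (\<lambda>j. {ql $ j .. qu $ j}) z
    = {x. (\<forall>j. ql $ j \<le> x $ j \<and> x $ j \<le> t1 $ j) \<and> (\<Sum>j\<in>UNIV. x $ j) = z}"
proof -
  have "(\<Sum>j\<in>UNIV. t1 $ j) \<le> (\<Sum>j\<in>UNIV. qu $ j)"
    using t1_between by (simp add: sum_mono)
  with z have z_le: "z \<le> (\<Sum>j\<in>UNIV. qu $ j)" by linarith
  have "x = t1" if "\<forall>j. t1 $ j \<le> x $ j" "(\<Sum>j\<in>UNIV. x $ j) = z" for x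
  proof (rule vec_eq_if_le_and_sum_eq[symmetric])
    show "\<forall>j. t1 $ j \<le> x $ j" by (fact that(1))
    then have "(\<Sum>j\<in>UNIV. t1 $ j) \<le> (\<Sum>j\<in>UNIV. x $ j)" by (simp add: sum_mono)
    with that(2) z(2) show "(\<Sum>j\<in>UNIV. t1 $ j) = (\<Sum>j\<in>UNIV. x $ j)" by linarith
  qed
  with t1_between show ?thesis
    unfolding star_argmax_chi_box[OF z(1) z_le] feasible_def
    by (auto intro: order_trans)
qed

lemma star_argmax_chi_box_above:
  assumes z: "(\<Sum>j\<in>UNIV. t1 $ j) \<le> z" "z \<le> (\<Sum>j\<in>UNIV. qu $ j)"
  shows "star_argmax (\<lambda>j. chi (t1 $ j, t2 $ j)) (\<lambda>j. {ql $ j .. qu $ j}) z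
    = {x. (\<forall>j. t1 $ j \<le> x $ j \<and> x $ j \<le> qu $ j) \<and> (\<Sum>j\<in>UNIV. x $ j) = z}"
proof -
  have "(\<Sum>j\<in>UNIV. ql $ j) \<le> (\<Sum>j\<in>UNIV. t1 $ j)"
    using t1_between by (simp add: sum_mono)
  with z have z_ge: "(\<Sum>j\<in>UNIV. ql $ j) \<le> z" by linarith
  have "x = t1" if "\<forall>j. x $ j \<le> t1 $ j" "(\<Sum>j\<in>UNIV. x $ j) = z" for x
  proof (rule vec_eq_if_le_and_sum_eq)
    show "\<forall>j. x $ j \<le> t1 $ j" by (fact that(1))
    then have "(\<Sum>j\<in>UNIV. x $ j) \<le> (\<Sum>j\<in>UNIV. t1 $ j)" by (simp add: sum_mono)
    with that(2) z(1) show "(\<Sum>j\<in>UNIV. x $ j) = (\<Sum>j\<in>UNIV. t1 $ j)" by linarith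
  qed
  with t1_between show ?thesis
    unfolding star_argmax_chi_box[OF z_ge z(2)] feasible_def
    by (auto intro: order_trans)
qed

lemma star_argmax_chi_box_top:
  "star_argmax (\<lambda>j. chi (t1 $ j, t2 $ j)) (\<lambda>j. {ql $ j .. qu $ j}) (\<Sum>j\<in>UNIV. t1 $ j) = {t1}"
proof -
  have "(\<Sum>j\<in>UNIV. ql $ j) \<le> (\<Sum>j\<in>UNIV. t1 $ j)"
    using t1_between by (simp add: sum_mono)
  then have "star_argmax (\<lambda>j. chi (t1 $ j, t2 $ j)) (\<lambda>j. {ql $ j .. qu $ j}) (\<Sum>j\<in>UNIV. t1 $ j)
      = {x. (\<forall>j. ql $ j \<le> x $ j \<and> x $ j \<le> t1 $ j) \<and> (\<Sum>j\<in>UNIV. x $ j) = (\<Sum>j\<in>UNIV. t1 $ j)}"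
    by (rule star_argmax_chi_box_below[OF _ order_refl])
  also have "\<dots> = {t1}"
    using t1_between by (auto intro: vec_eq_if_le_and_sum_eq)
  finally show ?thesis .
qed

end

theorem lemma5:
  fixes t1 t2 ql qu :: "real^'n"
  assumes "\<forall>j. ql $ j \<le> t1 $ j \<and> t1 $ j \<le> qu $ j"
  shows "minkowski_sum (\<lambda>j. {ql $ j .. qu $ j}) = {(\<Sum>j\<in>UNIV. ql $ j) .. (\<Sum>j\<in>UNIV. qu $ j)}
    \<and> (\<forall>z \<in> {(\<Sum>j\<in>UNIV. ql $ j) .. (\<Sum>j\<in>UNIV. qu $ j)}.
          star (\<lambda>j. chi (t1 $ j, t2 $ j)) (\<lambda>j. {ql $ j .. qu $ j}) z
            = chi ((\<Sum>j\<in>UNIV. t1 $ j), (\<Sum>j\<in>UNIV. t2 $ j)) z)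
    \<and> (\<forall>z. (\<Sum>j\<in>UNIV. ql $ j) \<le> z \<and> z < (\<Sum>j\<in>UNIV. t1 $ j) \<longrightarrow>
          star_argmax (\<lambda>j. chi (t1 $ j, t2 $ j)) (\<lambda>j. {ql $ j .. qu $ j}) z
            = {x. (\<forall>j. ql $ j \<le> x $ j \<and> x $ j \<le> t1 $ j) \<and> (\<Sum>j\<in>UNIV. x $ j) = z})
    \<and> star_argmax (\<lambda>j. chi (t1 $ j, t2 $ j)) (\<lambda>j. {ql $ j .. qu $ j}) (\<Sum>j\<in>UNIV. t1 $ j) = {t1}
    \<and> (\<forall>z. (\<Sum>j\<in>UNIV. t1 $ j) < z \<and> z \<le> (\<Sum>j\<in>UNIV. qu $ j) \<longrightarrow>
          star_argmax (\<lambda>j. chi (t1 $ j, t2 $ j)) (\<lambda>j. {ql $ j .. qu $ j}) z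
            = {x. (\<forall>j. t1 $ j \<le> x $ j \<and> x $ j \<le> qu $ j) \<and> (\<Sum>j\<in>UNIV. x $ j) = z})"
proof -
  have "\<forall>j. ql $ j \<le> qu $ j"
    using assms by (meson order_trans)
  then show ?thesis
    using minkowski_sum_box star_chi_box[OF assms] star_argmax_chi_box_top[OF assms]
      star_argmax_chi_box_below[OF assms] star_argmax_chi_box_above[OF assms]
    by auto
qed

end
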